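(* Let $S^1=\{z\in\mathbb{C}:|z|=1\}$, $\alpha\in(0,1)$, and $f:S^1\to S^1$, $f(z)=ze^{2\pi i\alpha}$. Let $\Delta$ be the partition of $S^1$ into orbits $\{f^k(z):k\in\mathbb{Z}\}$, $Y=S^1/\Delta$ with the quotient topology, and $p:S^1\to Y$ the projection. Then $p$ has property (CONT) for every $\alpha$, and $p$ has property (COMP) if and only if $\alpha$ is rational.
   Context: A $\Delta$-map is a continuous $h:S^1\to S^1$ mapping each element of $\Delta$ into some element of $\Delta$; $\mathrm{End}(S^1,\Delta)$ is the monoid of $\Delta$-maps, $\mathrm{End}(Y)=C(Y,Y)$, and $\psi(h)$ is the unique map with $p\circ h=\psi(h)\circ p$. Property (COMP): for every compact $L\subset Y$ there is a compact $K\subset S^1$ with $p(K)=L$. Property (CONT): $\psi:\mathrm{End}(S^1,\Delta)\to\mathrm{End}(Y)$ is continuous with respect to compact open topologies. *)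

theory Defs
  imports "HOL-Analysis.Analysis"
begin

definition quotient_space :: "'a topology \<Rightarrow> 'a set set \<Rightarrow> 'a set topology" where
  "quotient_space X Delta = topology (\<lambda>U. U \<subseteq> Delta \<and> openin X (\<Union>U))"

definition part_proj :: "'a set set \<Rightarrow> 'a \<Rightarrow> 'a set" where
  "part_proj Delta x = (THE D. D \<in> Delta \<and> x \<in> D)"

text \<open>Continuous self-maps of X, represented extensionally (undefined off the carrier).\<close>
definition End_maps :: "'a topology \<Rightarrow> ('a \<Rightarrow> 'a) set" where
  "End_maps X = {h. continuous_map X X h \<and> h \<in> extensional (topspace X)}"

definition Delta_maps :: "'a topology \<Rightarrow> 'a set set \<Rightarrow> ('a \<Rightarrow> 'a) set" where
  "Delta_maps X Delta = {h \<in> End_maps X. \<forall>D\<in>Delta. \<exists>E\<in>Delta. h ` D \<subseteq> E}"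

definition compact_open :: "'a topology \<Rightarrow> ('a \<Rightarrow> 'a) set \<Rightarrow> ('a \<Rightarrow> 'a) topology" where
  "compact_open X C =
     topology_generated_by {{h \<in> C. h ` K \<subseteq> U} | K U. compactin X K \<and> openin X U}"

definition psi :: "'a topology \<Rightarrow> 'a set set \<Rightarrow> ('a \<Rightarrow> 'a) \<Rightarrow> ('a set \<Rightarrow> 'a set)" where
  "psi X Delta h = (THE g. g \<in> End_maps (quotient_space X Delta) \<and>
        (\<forall>x\<in>topspace X. part_proj Delta (h x) = g (part_proj Delta x)))"

definition prop_COMP :: "'a topology \<Rightarrow> 'a set set \<Rightarrow> bool" where
  "prop_COMP X Delta \<longleftrightarrow>
     (\<forall>L. compactin (quotient_space X Delta) L \<longrightarrow>
          (\<exists>K. compactin X K \<and> part_proj Delta ` K = L))"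

definition prop_CONT :: "'a topology \<Rightarrow> 'a set set \<Rightarrow> bool" where
  "prop_CONT X Delta \<longleftrightarrow>
     continuous_map (compact_open X (Delta_maps X Delta))
       (compact_open (quotient_space X Delta) (End_maps (quotient_space X Delta)))
       (psi X Delta)"

definition circle :: "complex topology" where
  "circle = top_of_set (sphere 0 1)"

definition rot_orbit :: "real \<Rightarrow> complex \<Rightarrow> complex set" where
  "rot_orbit \<alpha> z = {z * exp (2 * of_real pi * \<i> * of_real \<alpha>) powi k | k :: int. True}"

definition rot_partition :: "real \<Rightarrow> complex set set" where
  "rot_partition \<alpha> = {rot_orbit \<alpha> z | z. z \<in> sphere 0 1}"

end

theory Submission
  imports Defs
begin

text \<open>
  If the blocks of a partition are closed and the distance to a block is constant along every
  block, the quotient is Hausdorff. For rational \<open>\<alpha>\<close> the orbits are finite, hence closed, and the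
  rotations are isometries permuting them; so \<open>Y\<close> is compact Hausdorff, and the union of the
  blocks of a compact \<open>L \<subseteq> Y\<close> is closed, hence compact, in \<open>S\<^sup>1\<close>. This gives (COMP) at once,
  and (CONT) because \<open>\<psi>\<close> pulls the subbasic set \<open>{g. g(L) \<subseteq> V}\<close> back to the subbasic set
  \<open>{h. h(\<Union>L) \<subseteq> \<Union>V}\<close>.

  For irrational \<open>\<alpha>\<close> every orbit is dense, so \<open>Y\<close> is indiscrete: (CONT) is immediate and every
  subset of \<open>Y\<close> is compact. A compact \<open>K \<subseteq> S\<^sup>1\<close> projecting onto all orbits but that of \<open>1\<close>
  would, with its countably many rotated copies and the points of that orbit, cover \<open>S\<^sup>1\<close>. By
  Baire one copy has interior, which meets the dense orbit of \<open>1\<close>, although \<open>K\<close> misses it.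
\<close>

section \<open>Quotients by a partition\<close>

lemma topspace_compact_open [simp]: "topspace (compact_open X C) = C"
proof -
  have "C \<in> {{h \<in> C. h ` K \<subseteq> U} | K U. compactin X K \<and> openin X U}"
    by (rule CollectI, rule exI[of _ "{}"], rule exI[of _ "{}"]) auto
  then show ?thesis
    unfolding compact_open_def topology_generated_by_topspace by blast
qed

lemma openin_compact_open_subbasic:
  "compactin X K \<Longrightarrow> openin X U \<Longrightarrow> openin (compact_open X C) {h \<in> C. h ` K \<subseteq> U}"
  unfolding compact_open_def by (rule topology_generated_by_Basis) blast

definition induced_map :: "'a set set \<Rightarrow> ('a \<Rightarrow> 'a) \<Rightarrow> 'a set \<Rightarrow> 'a set" where
  "induced_map Delta h D = (if D \<in> Delta then part_proj Delta (h (SOME x. x \<in> D)) else undefined)"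

locale space_partition =
  fixes X :: "'a topology" and Delta :: "'a set set"
  assumes Union_partition: "\<Union>Delta = topspace X"
    and partition_disjoint: "\<And>D E x. D \<in> Delta \<Longrightarrow> E \<in> Delta \<Longrightarrow> x \<in> D \<Longrightarrow> x \<in> E \<Longrightarrow> D = E"
    and empty_notin_partition: "{} \<notin> Delta"
begin

lemma openin_quotient_space:
  "openin (quotient_space X Delta) V \<longleftrightarrow> V \<subseteq> Delta \<and> openin X (\<Union>V)"
proof -
  have "\<Union>(S \<inter> T) = \<Union>S \<inter> \<Union>T" if "S \<subseteq> Delta" "T \<subseteq> Delta" for S T
    using that partition_disjoint by blast
  moreover have "openin X (\<Union>(\<Union>\<K>))" if "\<forall>S\<in>\<K>. S \<subseteq> Delta \<and> openin X (\<Union>S)" for \<K>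
  proof -
    have "\<Union>(\<Union>\<K>) = (\<Union>S\<in>\<K>. \<Union>S)" by blast
    then show ?thesis using that by (auto intro: openin_Union)
  qed
  ultimately have "istopology (\<lambda>V. V \<subseteq> Delta \<and> openin X (\<Union>V))"
    unfolding istopology_def by (auto simp: openin_Int)
  then show ?thesis
    unfolding quotient_space_def by (simp add: topology_inverse')
qed

lemma topspace_quotient_space [simp]: "topspace (quotient_space X Delta) = Delta"
proof -
  have "openin (quotient_space X Delta) Delta"
    by (simp add: openin_quotient_space Union_partition)
  then show ?thesis
    using openin_quotient_space openin_subset openin_topspace by blast
qed

lemma block_subset_topspace: "D \<in> Delta \<Longrightarrow> D \<subseteq> topspace X"
  using Union_partition by blast

lemma block_nonempty:
  assumes "D \<in> Delta" obtains x where "x \<in> D"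
  using assms empty_notin_partition by (metis ex_in_conv)

lemma part_proj_eqI: "D \<in> Delta \<Longrightarrow> x \<in> D \<Longrightarrow> part_proj Delta x = D"
  unfolding part_proj_def by (rule the_equality) (use partition_disjoint in blast)+

lemma part_proj_in_partition: "x \<in> topspace X \<Longrightarrow> part_proj Delta x \<in> Delta"
  and in_part_proj: "x \<in> topspace X \<Longrightarrow> x \<in> part_proj Delta x"
  using part_proj_eqI Union_partition by blast+

lemma part_proj_image_Union: "L \<subseteq> Delta \<Longrightarrow> part_proj Delta ` \<Union>L = L"
proof
  assume L: "L \<subseteq> Delta"
  show "part_proj Delta ` \<Union>L \<subseteq> L"
    using L part_proj_eqI by blast
  show "L \<subseteq> part_proj Delta ` \<Union>L"
  proof
    fix D assume "D \<in> L"
    moreover obtain x where "x \<in> D"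
      using L \<open>D \<in> L\<close> block_nonempty by blast
    ultimately show "D \<in> part_proj Delta ` \<Union>L"
      using L part_proj_eqI by (metis UnionI image_eqI subsetD)
  qed
qed

lemma closedin_Union_of_closedin:
  assumes "closedin (quotient_space X Delta) L"
  shows "closedin X (\<Union>L)"
proof -
  have L: "L \<subseteq> Delta" and op: "openin X (\<Union>(Delta - L))"
    using assms unfolding closedin_def openin_quotient_space by auto
  have "\<Union>L = topspace X - \<Union>(Delta - L)"
  proof
    show "\<Union>L \<subseteq> topspace X - \<Union>(Delta - L)"
      using L partition_disjoint block_subset_topspace by blast
    show "topspace X - \<Union>(Delta - L) \<subseteq> \<Union>L"
      using Union_partition by blast
  qed
  then show ?thesis
    by (simp add: closedin_diff op)
qed

lemma compactin_Union_of_Hausdorff_quotient: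
  assumes "compact_space X" "Hausdorff_space (quotient_space X Delta)"
    and "compactin (quotient_space X Delta) L"
  shows "compactin X (\<Union>L)"
  using assms closedin_compact_space closedin_Union_of_closedin compactin_imp_closedin by metis

context
  fixes h assumes h: "h \<in> Delta_maps X Delta"
begin

lemma induced_map_part_proj:
  assumes x: "x \<in> topspace X"
  shows "induced_map Delta h (part_proj Delta x) = part_proj Delta (h x)"
proof -
  let ?D = "part_proj Delta x"
  have D: "?D \<in> Delta" "x \<in> ?D"
    using x part_proj_in_partition in_part_proj by auto
  then obtain E where E: "E \<in> Delta" "h ` ?D \<subseteq> E"
    using h by (auto simp: Delta_maps_def)
  have "(SOME y. y \<in> ?D) \<in> ?D"
    using D by (metis someI)
  then have "h (SOME y. y \<in> ?D) \<in> E" and "h x \<in> E"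
    using D E by auto
  then have "part_proj Delta (h (SOME y. y \<in> ?D)) = E" and "part_proj Delta (h x) = E"
    using part_proj_eqI[OF E(1)] by auto
  then show ?thesis
    using D by (simp add: induced_map_def)
qed

lemma induced_map_mem_iff:
  assumes V: "V \<subseteq> Delta" and D: "D \<in> Delta" "x \<in> D"
  shows "induced_map Delta h D \<in> V \<longleftrightarrow> h x \<in> \<Union>V"
proof -
  have x: "x \<in> topspace X"
    using D block_subset_topspace by auto
  then have "induced_map Delta h D = part_proj Delta (h x)"
    using induced_map_part_proj D part_proj_eqI by metis
  moreover have hx: "h x \<in> topspace X"
    using h x by (auto simp: Delta_maps_def End_maps_def continuous_map_def)
  moreover have "part_proj Delta (h x) \<in> V \<longleftrightarrow> h x \<in> \<Union>V"
  proof
    assume "part_proj Delta (h x) \<in> V"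
    then show "h x \<in> \<Union>V"
      using in_part_proj[OF hx] by blast
  next
    assume "h x \<in> \<Union>V"
    then obtain E where "E \<in> V" "h x \<in> E" by blast
    then show "part_proj Delta (h x) \<in> V"
      using V part_proj_eqI by blast
  qed
  ultimately show ?thesis
    by simp
qed

lemma Union_induced_map_preimage:
  assumes V: "V \<subseteq> Delta"
  shows "\<Union>{D \<in> Delta. induced_map Delta h D \<in> V} = {x \<in> topspace X. h x \<in> \<Union>V}"
proof (intro set_eqI iffI)
  fix x assume "x \<in> \<Union>{D \<in> Delta. induced_map Delta h D \<in> V}"
  then obtain D where D: "D \<in> Delta" "x \<in> D" "induced_map Delta h D \<in> V"
    by blast
  then show "x \<in> {x \<in> topspace X. h x \<in> \<Union>V}"
    using induced_map_mem_iff[OF V D(1,2)] block_subset_topspace by blast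
next
  fix x assume x: "x \<in> {x \<in> topspace X. h x \<in> \<Union>V}"
  then have D: "part_proj Delta x \<in> Delta" "x \<in> part_proj Delta x"
    using part_proj_in_partition in_part_proj by auto
  then have "induced_map Delta h (part_proj Delta x) \<in> V"
    using induced_map_mem_iff[OF V D] x by blast
  then show "x \<in> \<Union>{D \<in> Delta. induced_map Delta h D \<in> V}"
    using D by blast
qed

lemma induced_map_in_End_maps: "induced_map Delta h \<in> End_maps (quotient_space X Delta)"
proof -
  have hX: "continuous_map X X h"
    using h by (simp add: Delta_maps_def End_maps_def)
  have image: "induced_map Delta h D \<in> Delta" if D: "D \<in> Delta" for D
  proof -
    obtain x where "x \<in> D"
      using D by (rule block_nonempty)
    moreover have "h ` D \<subseteq> topspace X"
      using D block_subset_topspace continuous_map_image_subset_topspace[OF hX] by blast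
    ultimately show ?thesis
      using induced_map_mem_iff[OF order_refl D] Union_partition by blast
  qed
  have preimage: "openin (quotient_space X Delta) {D \<in> Delta. induced_map Delta h D \<in> V}"
    if V: "openin (quotient_space X Delta) V" for V
  proof -
    have VD: "V \<subseteq> Delta" and op: "openin X (\<Union>V)"
      using V openin_quotient_space by auto
    then show ?thesis
      using openin_continuous_map_preimage[OF hX op]
      unfolding openin_quotient_space Union_induced_map_preimage[OF VD] by auto
  qed
  have "continuous_map (quotient_space X Delta) (quotient_space X Delta) (induced_map Delta h)"
    unfolding continuous_map_def using image preimage by auto
  moreover have "induced_map Delta h \<in> extensional Delta"
    by (simp add: extensional_def induced_map_def)
  ultimately show ?thesis
    by (simp add: End_maps_def)
qed

lemma psi_eq_induced_map: "psi X Delta h = induced_map Delta h"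
  unfolding psi_def
proof (rule the_equality)
  fix g assume g: "g \<in> End_maps (quotient_space X Delta) \<and>
    (\<forall>x\<in>topspace X. part_proj Delta (h x) = g (part_proj Delta x))"
  show "g = induced_map Delta h"
  proof
    fix D show "g D = induced_map Delta h D"
    proof (cases "D \<in> Delta")
      case True
      then obtain x where x: "x \<in> D" by (rule block_nonempty)
      then have x: "x \<in> topspace X" and D: "part_proj Delta x = D"
        using True block_subset_topspace part_proj_eqI[OF True] by auto
      have "g D = part_proj Delta (h x)"
        using g x D by simp
      also have "\<dots> = induced_map Delta h D"
        using induced_map_part_proj[OF x] D by simp
      finally show ?thesis .
    next
      case False
      then show ?thesis
        using g by (simp add: End_maps_def extensional_def induced_map_def)
    qed
  qed
qed (simp add: induced_map_in_End_maps induced_map_part_proj)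

lemma psi_image_subset_iff:
  assumes L: "L \<subseteq> Delta" and V: "V \<subseteq> Delta"
  shows "psi X Delta h ` L \<subseteq> V \<longleftrightarrow> h ` \<Union>L \<subseteq> \<Union>V"
proof -
  have block: "induced_map Delta h D \<in> V \<longleftrightarrow> h ` D \<subseteq> \<Union>V" if "D \<in> L" for D
  proof -
    have D: "D \<in> Delta" using that L by blast
    then obtain x where x: "x \<in> D" by (rule block_nonempty)
    have "\<forall>y\<in>D. induced_map Delta h D \<in> V \<longleftrightarrow> h y \<in> \<Union>V"
      using induced_map_mem_iff[OF V D] by blast
    then show ?thesis
      using x unfolding image_subset_iff by metis
  qed
  have "psi X Delta h ` L \<subseteq> V \<longleftrightarrow> (\<forall>D\<in>L. induced_map Delta h D \<in> V)"
    by (simp add: psi_eq_induced_map image_subset_iff)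
  also have "\<dots> \<longleftrightarrow> (\<forall>D\<in>L. h ` D \<subseteq> \<Union>V)"
    using block by blast
  also have "\<dots> \<longleftrightarrow> h ` \<Union>L \<subseteq> \<Union>V"
    by (simp add: image_Union UN_subset_iff)
  finally show ?thesis .
qed

lemma psi_in_End_maps: "psi X Delta h \<in> End_maps (quotient_space X Delta)"
  by (simp add: psi_eq_induced_map induced_map_in_End_maps)

end

lemma prop_CONT_if_preimages_open:
  assumes "\<And>L V. compactin (quotient_space X Delta) L \<Longrightarrow> openin (quotient_space X Delta) V \<Longrightarrow>
     openin (compact_open X (Delta_maps X Delta)) {h \<in> Delta_maps X Delta. h ` \<Union>L \<subseteq> \<Union>V}"
  shows "prop_CONT X Delta"
  unfolding prop_CONT_def
proof (subst (2) compact_open_def, rule continuous_on_generated_topo)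
  let ?Q = "quotient_space X Delta"
  let ?DM = "Delta_maps X Delta"
  fix B assume "B \<in> {{g \<in> End_maps ?Q. g ` K \<subseteq> U} | K U. compactin ?Q K \<and> openin ?Q U}"
  then obtain L V where B: "B = {g \<in> End_maps ?Q. g ` L \<subseteq> V}"
    and L: "compactin ?Q L" and V: "openin ?Q V"
    by blast
  have LD: "L \<subseteq> Delta" and VD: "V \<subseteq> Delta"
    using compactin_subset_topspace[OF L] V openin_quotient_space by auto
  have psi_B: "psi X Delta h \<in> B \<longleftrightarrow> h ` \<Union>L \<subseteq> \<Union>V" if "h \<in> ?DM" for h
    using B psi_image_subset_iff[OF that LD VD] psi_in_End_maps[OF that] by simp
  have "psi X Delta -` B \<inter> ?DM = {h \<in> ?DM. h ` \<Union>L \<subseteq> \<Union>V}"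
  proof (intro set_eqI)
    fix h show "h \<in> psi X Delta -` B \<inter> ?DM \<longleftrightarrow> h \<in> {h \<in> ?DM. h ` \<Union>L \<subseteq> \<Union>V}"
      using psi_B[of h] by auto
  qed
  then show "openin (compact_open X ?DM) (psi X Delta -` B \<inter> topspace (compact_open X ?DM))"
    using assms[OF L V] by simp
next
  let ?Q = "quotient_space X Delta"
  have mem: "End_maps ?Q \<in> {{g \<in> End_maps ?Q. g ` K \<subseteq> U} | K U. compactin ?Q K \<and> openin ?Q U}"
    by (intro CollectI exI[of _ "{}"]) simp
  have "psi X Delta ` Delta_maps X Delta \<subseteq> End_maps ?Q"
    using psi_in_End_maps by blast
  then show "psi X Delta ` topspace (compact_open X (Delta_maps X Delta))
      \<subseteq> \<Union>{{g \<in> End_maps ?Q. g ` K \<subseteq> U} | K U. compactin ?Q K \<and> openin ?Q U}"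
    using order_trans[OF _ Union_upper[OF mem]] by simp
qed

lemma prop_CONT_if_compact_Union:
  assumes "\<And>L. compactin (quotient_space X Delta) L \<Longrightarrow> compactin X (\<Union>L)"
  shows "prop_CONT X Delta"
proof (rule prop_CONT_if_preimages_open)
  fix L V
  assume "compactin (quotient_space X Delta) L" and "openin (quotient_space X Delta) V"
  then show "openin (compact_open X (Delta_maps X Delta)) {h \<in> Delta_maps X Delta. h ` \<Union>L \<subseteq> \<Union>V}"
    using assms openin_compact_open_subbasic unfolding openin_quotient_space by blast
qed

lemma prop_COMP_if_compact_Union:
  assumes "\<And>L. compactin (quotient_space X Delta) L \<Longrightarrow> compactin X (\<Union>L)"
  shows "prop_COMP X Delta"
  unfolding prop_COMP_def
proof (intro allI impI)
  fix L assume L: "compactin (quotient_space X Delta) L"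
  then have "part_proj Delta ` \<Union>L = L"
    using compactin_subset_topspace[OF L] part_proj_image_Union by simp
  then show "\<exists>K. compactin X K \<and> part_proj Delta ` K = L"
    using assms[OF L] by blast
qed

context
  assumes indiscrete: "\<And>V. openin (quotient_space X Delta) V \<Longrightarrow> V = {} \<or> V = Delta"
begin

lemma prop_CONT_if_indiscrete: "prop_CONT X Delta"
proof (rule prop_CONT_if_preimages_open)
  let ?DM = "Delta_maps X Delta"
  fix L V
  assume L: "compactin (quotient_space X Delta) L" and V: "openin (quotient_space X Delta) V"
  have LX: "\<Union>L \<subseteq> topspace X"
    using compactin_subset_topspace[OF L] Union_partition by auto
  have DM: "openin (compact_open X ?DM) ?DM"
    by (metis openin_topspace topspace_compact_open)
  consider "V = {}" "\<Union>L = {}" | "V = {}" "\<Union>L \<noteq> {}" | "V = Delta"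
    using indiscrete[OF V] by blast
  then show "openin (compact_open X ?DM) {h \<in> ?DM. h ` \<Union>L \<subseteq> \<Union>V}"
  proof cases
    case 1
    then show ?thesis using DM by simp
  next
    case 2
    then have "{h \<in> ?DM. h ` \<Union>L \<subseteq> \<Union>V} = {}"
      by auto
    then show ?thesis
      by (simp only: openin_empty)
  next
    case 3
    have "h ` \<Union>L \<subseteq> \<Union>V" if "h \<in> ?DM" for h
    proof -
      have "continuous_map X X h"
        using that by (simp add: Delta_maps_def End_maps_def)
      then have "h ` \<Union>L \<subseteq> topspace X"
        using LX continuous_map_image_subset_topspace by blast
      then show ?thesis
        using 3 Union_partition by simp
    qed
    then have "{h \<in> ?DM. h ` \<Union>L \<subseteq> \<Union>V} = ?DM"
      by blast
    then show ?thesis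
      using DM by simp
  qed
qed

lemma compactin_if_indiscrete:
  assumes L: "L \<subseteq> Delta"
  shows "compactin (quotient_space X Delta) L"
  unfolding compactin_def
proof (intro conjI allI impI)
  fix \<U> assume \<U>: "(\<forall>U\<in>\<U>. openin (quotient_space X Delta) U) \<and> L \<subseteq> \<Union>\<U>"
  show "\<exists>\<F>. finite \<F> \<and> \<F> \<subseteq> \<U> \<and> L \<subseteq> \<Union>\<F>"
  proof (cases "L = {}")
    case False
    then obtain U where "U \<in> \<U>" "U \<noteq> {}"
      using \<U> by blast
    then have "U \<in> \<U>" "U = Delta"
      using \<U> indiscrete by blast+
    then show ?thesis
      using L by (intro exI[of _ "{U}"]) auto
  qed auto
qed (use L in simp)

end

end

locale equidistant_partition = space_partition "top_of_set S" Delta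
  for S :: "'a::metric_space set" and Delta +
  assumes closed_block: "D \<in> Delta \<Longrightarrow> closed D"
    and infdist_invariant:
      "\<And>D E x y. D \<in> Delta \<Longrightarrow> E \<in> Delta \<Longrightarrow> x \<in> E \<Longrightarrow> y \<in> E \<Longrightarrow> infdist x D = infdist y D"
begin

definition closer_blocks :: "'a set \<Rightarrow> 'a set \<Rightarrow> 'a set set" where
  "closer_blocks A B = {F \<in> Delta. \<forall>x\<in>F. infdist x A < infdist x B}"

lemma openin_closer_blocks:
  assumes A: "A \<in> Delta" and B: "B \<in> Delta"
  shows "openin (quotient_space (top_of_set S) Delta) (closer_blocks A B)"
proof -
  have eq: "\<Union>(closer_blocks A B) = S \<inter> {x. infdist x A < infdist x B}"
  proof (intro set_eqI iffI)
    fix x assume "x \<in> \<Union>(closer_blocks A B)"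
    then show "x \<in> S \<inter> {x. infdist x A < infdist x B}"
      using block_subset_topspace unfolding closer_blocks_def by auto
  next
    fix x assume x: "x \<in> S \<inter> {x. infdist x A < infdist x B}"
    then have F: "part_proj Delta x \<in> Delta" "x \<in> part_proj Delta x"
      using part_proj_in_partition in_part_proj by auto
    have "infdist y A < infdist y B" if "y \<in> part_proj Delta x" for y
      using infdist_invariant[OF A F(1) that F(2)] infdist_invariant[OF B F(1) that F(2)] x by simp
    then have "part_proj Delta x \<in> closer_blocks A B"
      unfolding closer_blocks_def using F(1) by blast
    then show "x \<in> \<Union>(closer_blocks A B)"
      using F by blast
  qed
  have "open {x. infdist x A < infdist x B}"
    by (intro open_Collect_less continuous_on_infdist continuous_on_id)
  then have "openin (top_of_set S) (\<Union>(closer_blocks A B))"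
    unfolding eq by (rule openin_open_Int)
  moreover have "closer_blocks A B \<subseteq> Delta"
    unfolding closer_blocks_def by blast
  ultimately show ?thesis
    by (simp add: openin_quotient_space)
qed

lemma self_in_closer_blocks:
  assumes A: "A \<in> Delta" and B: "B \<in> Delta" and "A \<noteq> B"
  shows "A \<in> closer_blocks A B"
proof -
  have "infdist x A < infdist x B" if x: "x \<in> A" for x
  proof -
    have "x \<notin> B"
      using partition_disjoint[OF A B x] \<open>A \<noteq> B\<close> by blast
    moreover have "B \<noteq> {}"
      using B empty_notin_partition by blast
    ultimately show ?thesis
      using x infdist_pos_not_in_closed[OF closed_block[OF B]] by simp
  qed
  then show ?thesis
    using A unfolding closer_blocks_def by blast
qed

lemma disjnt_closer_blocks: "disjnt (closer_blocks A B) (closer_blocks B A)"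
proof -
  have False if AB: "F \<in> closer_blocks A B" and BA: "F \<in> closer_blocks B A" for F
  proof -
    obtain x where x: "x \<in> F"
      using AB block_nonempty unfolding closer_blocks_def by blast
    then have "infdist x A < infdist x B" and "infdist x B < infdist x A"
      using AB BA unfolding closer_blocks_def by auto
    then show False
      by simp
  qed
  then show ?thesis
    unfolding disjnt_def by blast
qed

lemma Hausdorff_quotient_space: "Hausdorff_space (quotient_space (top_of_set S) Delta)"
  unfolding Hausdorff_space_def topspace_quotient_space
proof (intro allI impI)
  fix A B assume "A \<in> Delta \<and> B \<in> Delta \<and> A \<noteq> B"
  then show "\<exists>U V. openin (quotient_space (top_of_set S) Delta) U \<and>
      openin (quotient_space (top_of_set S) Delta) V \<and> A \<in> U \<and> B \<in> V \<and> disjnt U V"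
    using openin_closer_blocks[of A B] openin_closer_blocks[of B A] self_in_closer_blocks[of A B]
      self_in_closer_blocks[of B A] disjnt_closer_blocks[of A B] by metis
qed

end

section \<open>Rotation orbits\<close>

definition e2pi :: "real \<Rightarrow> complex" where
  "e2pi t = exp (2 * of_real pi * \<i> * of_real t)"

abbreviation S1 :: "complex set" where
  "S1 \<equiv> sphere 0 1"

lemma norm_e2pi [simp]: "norm (e2pi t) = 1"
  by (simp add: e2pi_def)

lemma e2pi_nonzero [simp]: "e2pi t \<noteq> 0"
  by (simp add: e2pi_def)

lemma e2pi_add: "e2pi (s + t) = e2pi s * e2pi t"
  unfolding e2pi_def by (simp add: ring_distribs exp_add)

lemma e2pi_0 [simp]: "e2pi 0 = 1"
  by (simp add: e2pi_def)

lemma e2pi_of_int [simp]: "e2pi (of_int n) = 1"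
proof -
  have "e2pi (of_int n) = exp ((2 * of_int n * pi) * \<i>)"
    unfolding e2pi_def by (simp add: mult_ac)
  also have "\<dots> = 1"
    by (rule exp_integer_2pi) simp
  finally show ?thesis .
qed

lemma e2pi_diff_of_int: "e2pi (t - of_int n) = e2pi t"
  using e2pi_add[of "t - of_int n" "of_int n"] by simp

lemma e2pi_powi: "e2pi t powi k = e2pi (of_int k * t)"
  unfolding e2pi_def exp_power_int by (simp add: mult_ac)

lemma e2pi_surj:
  assumes "norm u = 1" obtains t where "e2pi t = u"
proof
  show "e2pi (Arg2pi u / (2 * pi)) = u"
    using assms complex_norm_eq_1_exp by (simp add: e2pi_def mult_ac)
qed

lemma continuous_on_e2pi: "continuous_on A e2pi"
  unfolding e2pi_def by (intro continuous_intros)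

lemma rot_orbit_eq: "rot_orbit a z = range (\<lambda>k::int. z * e2pi (of_int k * a))"
  by (simp add: rot_orbit_def e2pi_def[symmetric] e2pi_powi full_SetCompr_eq)

lemma rot_orbit_subset_sphere: "z \<in> S1 \<Longrightarrow> rot_orbit a z \<subseteq> S1"
  by (auto simp: rot_orbit_eq norm_mult)

lemma self_in_rot_orbit: "z \<in> rot_orbit a z"
  unfolding rot_orbit_eq by (rule range_eqI[of _ _ 0]) simp

lemma rot_orbit_eqI:
  assumes "w \<in> rot_orbit a z"
  shows "rot_orbit a w = rot_orbit a z"
proof -
  define f where "f j = z * e2pi (of_int j * a)" for j :: int
  obtain k where w: "w = f k"
    using assms unfolding rot_orbit_eq f_def by blast
  have "w * e2pi (of_int j * a) = f (k + j)" for j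
    by (simp add: w f_def mult.assoc ring_distribs e2pi_add)
  then have "rot_orbit a w = range (\<lambda>j. f (k + j))"
    unfolding rot_orbit_eq by simp
  also have "\<dots> = f ` range ((+) k)"
    by (simp only: image_image)
  also have "\<dots> = rot_orbit a z"
    by (simp add: rot_orbit_eq f_def)
  finally show ?thesis .
qed

lemma image_mult_rot_orbit: "(*) c ` rot_orbit a z = rot_orbit a (c * z)"
  unfolding rot_orbit_eq image_image by (simp add: mult.assoc)

lemma rot_orbit_in_rot_partition: "z \<in> S1 \<Longrightarrow> rot_orbit a z \<in> rot_partition a"
  unfolding rot_partition_def by blast

lemma topspace_circle [simp]: "topspace circle = S1"
  by (simp add: circle_def)

lemma space_partition_rot_partition: "space_partition circle (rot_partition a)"
proof
  show "\<Union>(rot_partition a) = topspace circle"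
    using rot_orbit_subset_sphere self_in_rot_orbit unfolding rot_partition_def by fastforce
  show "D = E" if "D \<in> rot_partition a" "E \<in> rot_partition a" "x \<in> D" "x \<in> E" for D E x
    using that rot_orbit_eqI unfolding rot_partition_def by blast
  show "{} \<notin> rot_partition a"
    using self_in_rot_orbit unfolding rot_partition_def by blast
qed

lemma part_proj_rot_partition: "z \<in> S1 \<Longrightarrow> part_proj (rot_partition a) z = rot_orbit a z"
  using space_partition.part_proj_eqI[OF space_partition_rot_partition]
    rot_orbit_in_rot_partition self_in_rot_orbit by blast

lemma infdist_mult_unit:
  fixes c :: "'a::real_normed_div_algebra"
  assumes "norm c = 1"
  shows "infdist (c * z) ((*) c ` D) = infdist z D"
proof -
  have "dist (c * z) (c * y) = dist z y" for y
    using assms by (simp add: dist_norm norm_mult right_diff_distrib[symmetric])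
  then show ?thesis
    unfolding infdist_def by (simp add: image_image)
qed

lemma infdist_rot_orbit_invariant:
  assumes D: "D \<in> rot_partition a" and w: "w \<in> rot_orbit a z"
  shows "infdist w D = infdist z D"
proof -
  obtain k :: int where wz: "w = e2pi (of_int k * a) * z"
    using w unfolding rot_orbit_eq by (auto simp: mult.commute)
  obtain d where d: "D = rot_orbit a d"
    using D unfolding rot_partition_def by blast
  have "e2pi (of_int k * a) * d \<in> rot_orbit a d"
    unfolding rot_orbit_eq by (auto simp: mult.commute)
  then have "(*) (e2pi (of_int k * a)) ` D = D"
    using d image_mult_rot_orbit[of _ a d] rot_orbit_eqI by simp
  then show ?thesis
    using wz infdist_mult_unit[OF norm_e2pi, of "of_int k * a" z D] by simp
qed

lemma finite_rot_orbit:
  assumes "a \<in> \<rat>"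
  shows "finite (rot_orbit a z)"
proof -
  obtain p q :: int where "q > 0" and a: "a = of_int p / of_int q"
    using assms by (metis Rats_cases')
  have period: "e2pi (of_int k * a) = e2pi (of_int (k mod q) * a)" for k
  proof -
    have qa: "of_int q * a = of_int p"
      using \<open>q > 0\<close> a by simp
    have "of_int k * a = of_int (k div q * q + k mod q) * a"
      by (simp only: div_mult_mod_eq)
    also have "\<dots> = of_int (k mod q) * a + of_int (k div q) * (of_int q * a)"
      unfolding of_int_add of_int_mult by (simp add: algebra_simps)
    also have "\<dots> = of_int (k mod q) * a + of_int (k div q * p)"
      by (simp add: qa)
    finally show ?thesis
      by (simp only: e2pi_add e2pi_of_int mult_1_right)
  qed
  have "rot_orbit a z \<subseteq> (\<lambda>j. z * e2pi (of_int j * a)) ` {0..<q}"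
  proof
    fix y assume "y \<in> rot_orbit a z"
    then obtain k where "y = z * e2pi (of_int k * a)"
      unfolding rot_orbit_eq by blast
    then have "y = z * e2pi (of_int (k mod q) * a)" and "k mod q \<in> {0..<q}"
      using period \<open>q > 0\<close> by auto
    then show "y \<in> (\<lambda>j. z * e2pi (of_int j * a)) ` {0..<q}"
      by blast
  qed
  then show ?thesis
    by (rule finite_subset) simp
qed

lemma compact_space_circle: "compact_space circle"
  unfolding circle_def by (simp add: compact_space_subtopology)

lemma Hausdorff_rot_quotient_rational:
  assumes "a \<in> \<rat>"
  shows "Hausdorff_space (quotient_space circle (rot_partition a))"
proof -
  have "equidistant_partition S1 (rot_partition a)"
  proof (intro equidistant_partition.intro equidistant_partition_axioms.intro)
    show "space_partition (top_of_set S1) (rot_partition a)"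
      using space_partition_rot_partition unfolding circle_def .
    show "closed D" if "D \<in> rot_partition a" for D
      using that finite_rot_orbit[OF assms] unfolding rot_partition_def
      by (auto intro: finite_imp_closed)
    show "infdist x D = infdist y D"
      if D: "D \<in> rot_partition a" and E: "E \<in> rot_partition a" "x \<in> E" "y \<in> E" for D E x y
    proof -
      obtain e where "E = rot_orbit a e"
        using E(1) unfolding rot_partition_def by blast
      then have "y \<in> rot_orbit a x"
        using E(2,3) rot_orbit_eqI by metis
      then show ?thesis
        using infdist_rot_orbit_invariant[OF D] by simp
    qed
  qed
  then show ?thesis
    unfolding circle_def by (rule equidistant_partition.Hausdorff_quotient_space)
qed

lemma compactin_Union_rot_partition_rational:
  assumes "a \<in> \<rat>" and "compactin (quotient_space circle (rot_partition a)) L"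
  shows "compactin circle (\<Union>L)"
  using space_partition.compactin_Union_of_Hausdorff_quotient[OF space_partition_rot_partition
      compact_space_circle Hausdorff_rot_quotient_rational] assms .

lemma rot_orbit_meets_openin:
  assumes irr: "a \<notin> \<rat>" and z: "z \<in> S1" and W: "openin circle W" "w \<in> W"
  obtains k :: int where "z * e2pi (of_int k * a) \<in> W"
proof -
  obtain T where T: "open T" "W = S1 \<inter> T"
    using W(1) unfolding circle_def openin_open by blast
  have "z \<noteq> 0" "norm (w / z) = 1"
    using z W(2) T by (auto simp: norm_divide)
  then obtain t where t: "z * e2pi t = w"
    by (metis e2pi_surj nonzero_mult_div_cancel_left times_divide_eq_right)
  have "open ((\<lambda>s. z * e2pi s) -` T)"
    by (rule open_vimage[OF T(1)]) (intro continuous_intros continuous_on_e2pi)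
  moreover have "t \<in> (\<lambda>s. z * e2pi s) -` T"
    using t W(2) T by auto
  ultimately obtain d where "d > 0" and d: "ball t d \<subseteq> (\<lambda>s. z * e2pi s) -` T"
    by (meson openE)
  obtain h k where "\<bar>of_int k * a - of_int h - t\<bar> < d"
    using sequence_of_fractional_parts_is_dense[OF irr \<open>d > 0\<close>] by metis
  then have "of_int k * a - of_int h \<in> ball t d"
    by (simp add: dist_real_def abs_minus_commute)
  then have "z * e2pi (of_int k * a) \<in> T"
    using d e2pi_diff_of_int by auto
  moreover have "z * e2pi (of_int k * a) \<in> S1"
    using z by (simp add: norm_mult)
  ultimately show ?thesis
    using that T(2) by blast
qed

lemma rot_quotient_indiscrete:
  assumes irr: "a \<notin> \<rat>" and V: "openin (quotient_space circle (rot_partition a)) V"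
  shows "V = {} \<or> V = rot_partition a"
proof (cases "V = {}")
  case False
  interpret space_partition circle "rot_partition a"
    by (rule space_partition_rot_partition)
  have VD: "V \<subseteq> rot_partition a" and op: "openin circle (\<Union>V)"
    using V openin_quotient_space by auto
  obtain D0 where "D0 \<in> V"
    using False by blast
  then obtain w where w: "w \<in> \<Union>V"
    using VD block_nonempty by blast
  have "D \<in> V" if D: "D \<in> rot_partition a" for D
  proof -
    obtain z where z: "z \<in> S1" "D = rot_orbit a z"
      using D unfolding rot_partition_def by blast
    obtain k where "z * e2pi (of_int k * a) \<in> \<Union>V"
      using rot_orbit_meets_openin[OF irr z(1) op w] by blast
    then obtain E where E: "E \<in> V" "z * e2pi (of_int k * a) \<in> E"
      by blast
    moreover have "z * e2pi (of_int k * a) \<in> D"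
      using z(2) unfolding rot_orbit_eq by blast
    ultimately have "D = E"
      using partition_disjoint[OF D] VD by blast
    then show "D \<in> V"
      using E(1) by simp
  qed
  then show ?thesis
    using VD by blast
qed simp

lemma circle_interior_of_singleton: "circle interior_of {w} = {}"
proof -
  have "\<not> openin circle {w}"
  proof
    assume op: "openin circle {w}"
    then have "closedin circle {w}"
      using openin_subset unfolding circle_def by fastforce
    moreover have "connected_space circle"
      unfolding circle_def by (simp add: connected_space_subtopology connected_sphere)
    ultimately have "{w} = S1"
      using op connected_space_clopen_in by (metis insert_not_empty topspace_circle)
    moreover have "1 \<in> S1" "-1 \<in> S1"
      by simp_all
    ultimately have "(1::complex) = -1"
      by (metis singletonD)
    then show False
      by simp
  qed
  moreover have "circle interior_of {w} \<subseteq> {w}"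
    by (rule interior_of_subset)
  ultimately show ?thesis
    using openin_interior_of by (metis subset_singletonD)
qed

lemma closedin_circle_mult_image:
  assumes K: "compactin circle K" and c: "norm c = 1"
  shows "closedin circle ((*) c ` K)"
proof -
  have "compact K"
    using K unfolding circle_def by (simp add: compactin_subtopology)
  then have "compact ((*) c ` K)"
    by (intro compact_continuous_image continuous_intros)
  moreover have "(*) c ` K \<subseteq> S1"
    using compactin_subset_topspace[OF K] c by (auto simp: norm_mult)
  ultimately show ?thesis
    unfolding circle_def by (simp add: closed_subset compact_imp_closed)
qed

lemma Baire_circle:
  assumes "countable G" and "\<Union>G = S1" and "\<And>T. T \<in> G \<Longrightarrow> closedin circle T"
  obtains T where "T \<in> G" and "circle interior_of T \<noteq> {}"
proof -
  have "completely_metrizable_space circle"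
    unfolding circle_def
    by (rule completely_metrizable_space_closedin[OF completely_metrizable_space_euclidean]) simp
  moreover have "circle interior_of \<Union>G \<noteq> {}"
    using assms(2) interior_of_topspace[of circle] by (simp add: sphere_eq_empty)
  ultimately show ?thesis
    using Baire_category_alt[OF _ assms(1)] assms(3) that by blast
qed

lemma circle_not_covered_by_rotations:
  assumes irr: "a \<notin> \<rat>" and K: "compactin circle K" and disj: "K \<inter> rot_orbit a 1 = {}"
  shows "\<not> S1 \<subseteq> rot_orbit a 1 \<union> (\<Union>j. (*) (e2pi (of_int j * a)) ` K)"
proof
  let ?c = "\<lambda>j::int. e2pi (of_int j * a)"
  assume cover: "S1 \<subseteq> rot_orbit a 1 \<union> (\<Union>j. (*) (?c j) ` K)"
  define G where "G = range (\<lambda>j. {?c j}) \<union> range (\<lambda>j. (*) (?c j) ` K)"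
  have "\<Union>G = S1"
  proof
    show "\<Union>G \<subseteq> S1"
      using compactin_subset_topspace[OF K] unfolding G_def by (auto simp: norm_mult)
    show "S1 \<subseteq> \<Union>G"
      using cover unfolding G_def rot_orbit_eq by auto
  qed
  moreover have "closedin circle T" if T: "T \<in> G" for T
  proof -
    obtain j where "T = {?c j} \<or> T = (*) (?c j) ` K"
      using T unfolding G_def by blast
    then show ?thesis
      using closedin_circle_mult_image[OF K norm_e2pi] unfolding circle_def by auto
  qed
  moreover have "countable G"
    unfolding G_def by simp
  ultimately obtain T where T: "T \<in> G" and "circle interior_of T \<noteq> {}"
    using Baire_circle by metis
  then obtain w where w: "w \<in> circle interior_of T"
    by blast
  obtain j where "T = {?c j} \<or> T = (*) (?c j) ` K"
    using T unfolding G_def by blast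
  then have w: "w \<in> circle interior_of ((*) (?c j) ` K)"
    using w circle_interior_of_singleton by auto
  have "(1::complex) \<in> S1"
    by simp
  then obtain k where "1 * ?c k \<in> circle interior_of ((*) (?c j) ` K)"
    by (rule rot_orbit_meets_openin[OF irr _ openin_interior_of w])
  then obtain y where y: "y \<in> K" "?c k = ?c j * y"
    using interior_of_subset[of circle "(*) (?c j) ` K"] by auto
  have "?c k = ?c j * ?c (k - j)"
    by (simp add: e2pi_add[symmetric] ring_distribs)
  then have "y = 1 * ?c (k - j)"
    using y(2) by simp
  then have "y \<in> rot_orbit a 1"
    unfolding rot_orbit_eq by (rule range_eqI)
  then show False
    using disj y(1) by blast
qed

lemma not_prop_COMP_irrational:
  assumes irr: "a \<notin> \<rat>"
  shows "\<not> prop_COMP circle (rot_partition a)"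
proof
  interpret space_partition circle "rot_partition a"
    by (rule space_partition_rot_partition)
  define Ob where "Ob = rot_orbit a 1"
  assume "prop_COMP circle (rot_partition a)"
  moreover have "compactin (quotient_space circle (rot_partition a)) (rot_partition a - {Ob})"
    using compactin_if_indiscrete[OF rot_quotient_indiscrete[OF irr]] by blast
  ultimately obtain K where K: "compactin circle K"
    and pK: "part_proj (rot_partition a) ` K = rot_partition a - {Ob}"
    unfolding prop_COMP_def by blast
  have KS: "K \<subseteq> S1"
    using compactin_subset_topspace[OF K] by simp
  have "K \<inter> Ob = {}"
  proof (intro equals0I)
    fix y assume y: "y \<in> K \<inter> Ob"
    then have "part_proj (rot_partition a) y = Ob"
      using KS part_proj_rot_partition rot_orbit_eqI unfolding Ob_def by blast
    then show False
      using pK y by blast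
  qed
  moreover have "S1 \<subseteq> Ob \<union> (\<Union>j. (*) (e2pi (of_int j * a)) ` K)"
  proof
    fix z assume z: "z \<in> S1"
    show "z \<in> Ob \<union> (\<Union>j. (*) (e2pi (of_int j * a)) ` K)"
    proof (cases "z \<in> Ob")
      case False
      then have "rot_orbit a z \<in> rot_partition a - {Ob}"
        using z rot_orbit_in_rot_partition self_in_rot_orbit by blast
      then obtain y where y: "y \<in> K" "rot_orbit a y = rot_orbit a z"
        using pK KS part_proj_rot_partition by (metis (no_types, lifting) imageE subsetD)
      then obtain j where "z = y * e2pi (of_int j * a)"
        using self_in_rot_orbit[of z a] unfolding rot_orbit_eq by auto
      then show ?thesis
        using y(1) by (auto simp: mult.commute)
    qed simp
  qed
  ultimately show False
    using circle_not_covered_by_rotations[OF irr K] unfolding Ob_def by blast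
qed

lemma prop_CONT_rot_partition: "prop_CONT circle (rot_partition a)"
proof -
  interpret space_partition circle "rot_partition a"
    by (rule space_partition_rot_partition)
  show ?thesis
  proof (cases "a \<in> \<rat>")
    case True
    show ?thesis
      by (rule prop_CONT_if_compact_Union[OF compactin_Union_rot_partition_rational[OF True]])
  next
    case False
    show ?thesis
      by (rule prop_CONT_if_indiscrete[OF rot_quotient_indiscrete[OF False]])
  qed
qed

lemma prop_COMP_rot_partition_iff: "prop_COMP circle (rot_partition a) \<longleftrightarrow> a \<in> \<rat>"
proof -
  interpret space_partition circle "rot_partition a"
    by (rule space_partition_rot_partition)
  show ?thesis
  proof (cases "a \<in> \<rat>")
    case True
    have "prop_COMP circle (rot_partition a)"
      by (rule prop_COMP_if_compact_Union[OF compactin_Union_rot_partition_rational[OF True]])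
    then show ?thesis
      using True by simp
  next
    case False
    then show ?thesis
      using not_prop_COMP_irrational by simp
  qed
qed

theorem mainTheorem11:
  fixes \<alpha> :: real
  assumes "0 < \<alpha>" and "\<alpha> < 1"
  shows "prop_CONT circle (rot_partition \<alpha>) \<and>
         (prop_COMP circle (rot_partition \<alpha>) \<longleftrightarrow> \<alpha> \<in> \<rat>)"
  by (simp add: prop_CONT_rot_partition prop_COMP_rot_partition_iff)

end
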